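(* Let $\ell\geq2$ and $w\geq 0$. For every $d\geq0$, $\prod_{\lambda\in\mathrm{Par}(d)}\vartheta_\ell(\lambda)=\ell^{\,l(d)}$. Consequently $$\prod_{d=0}^{w}\ \prod_{\lambda\in\mathrm{Par}(d)}\vartheta_\ell(\lambda)^{k(\ell-2,w-d)}=\ell^{\,b_\ell(w)},$$ where $b_\ell(w)$ is defined by $\sum_{w\geq0}b_\ell(w)q^w=P(q)^{\ell-2}L(q)$.
   Context: $\mathrm{Par}(d)$ is the set of partitions of $d$, $l(\lambda)$ the number of parts, $m_n(\lambda)$ the multiplicity of part $n$, $l(d)=\sum_{\lambda\in\mathrm{Par}(d)}l(\lambda)$, and $L(q)=\sum_{d\geq0}l(d)q^d$, $P(q)=\prod_{i\geq1}(1-q^i)^{-1}$. $k(m,j)$ is the number of $m$-multipartitions of $j$ (tuples of $m$ partitions with total size $j$), i.e. the coefficient of $q^j$ in $P(q)^m$ (with $k(0,j)=\delta_{j0}$). For a prime $p$, $\nu_p$ is the $p$-adic valuation and $d_p(a)=\sum_{j\geq1}\lfloor a/p^j\rfloor$. For $r\geq1$, $\vartheta_{p^r}(\lambda)=\prod_{n\geq1,\ 0\leq\nu_p(n)<r}p^{(r-\nu_p(n))m_n(\lambda)+d_p(m_n(\lambda))}$. If $\ell=\prod_{i=1}^s p_i^{r_i}$ is the prime factorization, $\vartheta_\ell(\lambda)=\prod_{i=1}^s\vartheta_{p_i^{r_i}}(\lambda)$. *)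

theory Defs
  imports "HOL-Library.Multiset" "HOL-Computational_Algebra.Computational_Algebra"
begin

definition Par :: "nat \<Rightarrow> nat multiset set" where
  "Par d = {M. (\<forall>n\<in>#M. 0 < n) \<and> sum_mset M = d}"

text \<open>Number of parts l(lambda) is size M; multiplicity m_n(lambda) is count M n.\<close>
definition ltot :: "nat \<Rightarrow> nat" where
  "ltot d = (\<Sum>M\<in>Par d. size M)"

definition kmp :: "nat \<Rightarrow> nat \<Rightarrow> nat" where
  "kmp m j = card {xs :: nat multiset list. length xs = m \<and>
      (\<forall>M\<in>set xs. \<forall>n\<in>#M. 0 < n) \<and> sum_list (map sum_mset xs) = j}"

text \<open>P(q) = sum_d |Par d| q^d = prod (1-q^i)^(-1), and L(q).\<close>
definition Pfps :: "nat fps" where "Pfps = Abs_fps (\<lambda>d. card (Par d))"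
definition Lfps :: "nat fps" where "Lfps = Abs_fps (\<lambda>d. ltot d)"

definition bcoef :: "nat \<Rightarrow> nat \<Rightarrow> nat" where
  "bcoef l w = fps_nth (Pfps ^ (l - 2) * Lfps) w"

text \<open>d_p(a) = sum_{j>=1} floor(a/p^j); terms with j > a vanish for p >= 2.\<close>
definition dp :: "nat \<Rightarrow> nat \<Rightarrow> nat" where
  "dp p a = (\<Sum>j\<in>{1..a}. a div p ^ j)"

text \<open>theta_{p^r}(lambda); factors with m_n(lambda) = 0 equal 1 and are omitted.\<close>
definition theta_pp :: "nat \<Rightarrow> nat \<Rightarrow> nat multiset \<Rightarrow> nat" where
  "theta_pp p r M = (\<Prod>n\<in>{n\<in>set_mset M. 1 \<le> n \<and> multiplicity p n < r}.
      p ^ ((r - multiplicity p n) * count M n + dp p (count M n)))"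

definition theta :: "nat \<Rightarrow> nat multiset \<Rightarrow> nat" where
  "theta l M = (\<Prod>p\<in>prime_factors l. theta_pp p (multiplicity p l) M)"

end

theory Submission
  imports Defs
begin

(*
  Write C(a) for the total number of parts equal to a over all partitions
  of d, so that l(d) = sum of C(a) over a = 1..d.  For a prime power p^r, taking the
  product of theta_{p^r} over Par(d) gives p to the exponent

     sum over n with nu_p(n) < r of  (r - nu_p(n)) C(n) + sum_{j>=1} C(n p^j),

  where the second summand comes from d_p(m_n) = sum_j floor(m_n / p^j) together with a
  Glaisher-type identity: summed over Par(d), floor(m_n(lambda)/k) and m_{nk}(lambda)
  agree, since both count the pairs (lambda, t) with t k n <= d after removing t k
  copies of n (resp. t copies of nk).  Regrouping by N = n p^j, each N receives the
  weight (r - nu_p(N))_+ + min(nu_p(N), r) = r, so the exponent is r l(d).  Multiplying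
  over the prime factorisation of l gives the first claim.  The second follows since
  k(m, j) is the j-th coefficient of P(q)^m, so the exponent is a Cauchy product.
*)

section \<open>Partitions\<close>

lemma count_times_le_sum: "count M n * n \<le> sum_mset (M :: nat multiset)"
  by (induction M) auto

lemma Par_parts_bounded: "M \<in> Par d \<Longrightarrow> set_mset M \<subseteq> {1..d}"
proof
  fix x assume M: "M \<in> Par d" and x: "x \<in> set_mset M"
  then have "0 < x" "count M x * x \<le> d" using count_times_le_sum[of M x] by (auto simp: Par_def)
  moreover have "1 \<le> count M x" using x by (simp add: Suc_le_eq)
  ultimately show "x \<in> {1..d}" by (auto intro: order.trans[rotated] simp: mult_le_mono1)
qed

lemma Par_count_le: "M \<in> Par d \<Longrightarrow> 0 < n \<Longrightarrow> count M n \<le> d"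
  using count_times_le_sum[of M n] by (auto simp: Par_def intro: order.trans[rotated])

text \<open>A partition of d has at most d parts, all in 1..d, so Par(d) is finite.\<close>

lemma finite_Par: "finite (Par d)"
proof -
  have "Par d \<subseteq> mset ` {xs. set xs \<subseteq> {1..d} \<and> length xs \<le> d}"
  proof
    fix M assume M: "M \<in> Par d"
    obtain xs where xs: "mset xs = M" using ex_mset by blast
    have "\<forall>n\<in>#M. 0 < n" using M by (simp add: Par_def)
    then have "size M \<le> sum_mset M" by (induction M) auto
    then have "size M \<le> d" using M by (simp add: Par_def)
    then show "M \<in> mset ` {xs. set xs \<subseteq> {1..d} \<and> length xs \<le> d}"
      using xs Par_parts_bounded[OF M] by (auto intro!: image_eqI[of _ _ xs])
  qed
  then show ?thesis by (rule finite_subset) (auto intro: finite_lists_length_le)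
qed

definition parts_total :: "nat \<Rightarrow> nat \<Rightarrow> nat" where
  "parts_total d a = (\<Sum>M\<in>Par d. count M a)"

lemma parts_total_vanishes: "d < a \<Longrightarrow> parts_total d a = 0"
  unfolding parts_total_def
  by (rule sum.neutral) (use Par_parts_bounded in \<open>fastforce simp: not_in_iff\<close>)

lemma ltot_eq_sum_parts_total: "ltot d = (\<Sum>a\<in>{1..d}. parts_total d a)"
proof -
  have "size M = (\<Sum>a\<in>{1..d}. count M a)" if "M \<in> Par d" for M
    unfolding size_multiset_overloaded_eq
    by (rule sum.mono_neutral_left) (use Par_parts_bounded[OF that] in \<open>auto simp: not_in_iff\<close>)
  then show ?thesis
    unfolding ltot_def parts_total_def by (subst sum.swap) (rule sum.cong[OF refl])
qed

section \<open>A Glaisher-type identity\<close>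

text \<open>Removing s copies of the part a is a bijection onto the partitions of d - s a.\<close>

lemma card_Par_count_ge:
  assumes "0 < a"
  shows "card {M\<in>Par d. s \<le> count M a} = (if s * a \<le> d then card (Par (d - s * a)) else 0)"
proof (cases "s * a \<le> d")
  case True
  let ?R = "replicate_mset s a"
  have "bij_betw (\<lambda>M. M - ?R) {M\<in>Par d. s \<le> count M a} (Par (d - s * a))"
  proof (rule bij_betw_byWitness[where f' = "\<lambda>N. N + ?R"])
    show "\<forall>M\<in>{M \<in> Par d. s \<le> count M a}. M - ?R + ?R = M"
      by (auto simp: count_le_replicate_mset_subset_eq)
    show "\<forall>N\<in>Par (d - s * a). N + ?R - ?R = N" by simp
    show "(\<lambda>M. M - ?R) ` {M \<in> Par d. s \<le> count M a} \<subseteq> Par (d - s * a)"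
    proof safe
      fix M assume M: "M \<in> Par d" "s \<le> count M a"
      then have "M = (M - ?R) + ?R" by (auto simp: count_le_replicate_mset_subset_eq)
      then have "sum_mset M = sum_mset (M - ?R) + sum_mset ?R" by (metis sum_mset.union)
      then have "sum_mset M = sum_mset (M - ?R) + s * a" by simp
      then show "M - ?R \<in> Par (d - s * a)" using M by (auto simp: Par_def dest: in_diffD)
    qed
    show "(\<lambda>N. N + ?R) ` Par (d - s * a) \<subseteq> {M \<in> Par d. s \<le> count M a}"
    proof safe
      fix N assume N: "N \<in> Par (d - s * a)"
      have "sum_mset (N + ?R) = sum_mset N + s * a" by simp
      then show "N + ?R \<in> Par d" using N True assms by (auto simp: Par_def)
    qed simp
  qed
  then show ?thesis using True by (simp add: bij_betw_same_card)
next
  case False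
  have "{M\<in>Par d. s \<le> count M a} = {}"
  proof safe
    fix M assume M: "M \<in> Par d" "s \<le> count M a"
    have "s * a \<le> count M a * a" using M by simp
    also have "\<dots> \<le> d" using count_times_le_sum[of M a] M by (simp add: Par_def)
    finally show "M \<in> {}" using False by simp
  qed
  then show ?thesis using False by (simp only: if_False card.empty)
qed

lemma div_as_card:
  assumes "c \<le> d" "0 < k"
  shows "c div k = card {t\<in>{1..d}. t * k \<le> c}"
proof -
  have "{t\<in>{1..d}. t * k \<le> c} = {1..c div k}"
  proof safe
    fix t assume "t \<in> {1..d}" "t * k \<le> c"
    then show "t \<in> {1..c div k}" using assms by (simp add: less_eq_div_iff_mult_less_eq)
  next
    fix t assume t: "t \<in> {1..c div k}"
    have "c div k \<le> c" by (rule div_le_dividend)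
    then show "t \<in> {1..d}" using t assms by (simp only: atLeastAtMost_iff) (meson order.trans)
    show "t * k \<le> c" using t assms by (simp add: less_eq_div_iff_mult_less_eq)
  qed
  then show ?thesis by simp
qed

text \<open>Summed over Par(d), floor(m_n/k) counts the pairs (lambda, t) with t k <= m_n(lambda);
  the count depends only on the product k n, which gives the identity below.\<close>

lemma sum_count_div:
  assumes "0 < n" "0 < k"
  shows "(\<Sum>M\<in>Par d. count M n div k) =
         (\<Sum>t\<in>{1..d}. if t * (k * n) \<le> d then card (Par (d - t * (k * n))) else 0)"
proof -
  have "(\<Sum>M\<in>Par d. count M n div k) = (\<Sum>M\<in>Par d. card {t\<in>{1..d}. t * k \<le> count M n})"
    by (rule sum.cong[OF refl]) (rule div_as_card[OF Par_count_le[OF _ assms(1)] assms(2)])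
  also have "\<dots> = (\<Sum>t\<in>{1..d}. card {M\<in>Par d. t * k \<le> count M n})"
    by (simp only: card_eq_sum sum.inter_filter finite_Par finite_atLeastAtMost)
       (rule sum.swap)
  also have "\<dots> = (\<Sum>t\<in>{1..d}. if t * (k * n) \<le> d then card (Par (d - t * (k * n))) else 0)"
    by (simp only: card_Par_count_ge[OF assms(1)] mult.assoc)
  finally show ?thesis .
qed

lemma sum_count_div_eq_parts_total:
  assumes "0 < n" "0 < k"
  shows "(\<Sum>M\<in>Par d. count M n div k) = parts_total d (n * k)"
proof -
  have nk: "0 < n * k" using assms by simp
  have "(\<Sum>M\<in>Par d. count M n div k) =
        (\<Sum>t\<in>{1..d}. if t * (k * n) \<le> d then card (Par (d - t * (k * n))) else 0)"
    using sum_count_div[OF assms] .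
  also have "\<dots> = (\<Sum>M\<in>Par d. count M (n * k) div 1)"
    unfolding sum_count_div[OF nk zero_less_one] by (simp only: mult_1 mult.commute[of n k])
  finally show ?thesis by (simp add: parts_total_def)
qed

section \<open>Counting by p-adic valuation\<close>

lemma multiplicity_le_self:
  assumes "prime (p :: nat)" "0 < N"
  shows "multiplicity p N \<le> N"
proof -
  have "p ^ multiplicity p N \<le> N" using assms multiplicity_dvd dvd_imp_le by blast
  moreover have "multiplicity p N < 2 ^ multiplicity p N" by simp
  moreover have "2 ^ multiplicity p N \<le> p ^ multiplicity p N"
    using prime_ge_2_nat[OF assms(1)] power_mono by blast
  ultimately show ?thesis by linarith
qed

lemma multiplicity_times_prime_power:
  assumes "prime (p :: nat)" "0 < n"
  shows "multiplicity p (n * p ^ j) = multiplicity p n + j"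
  using assms prime_gt_1_nat[OF assms(1)]
  by (simp add: prime_elem_multiplicity_mult_distrib multiplicity_same_power)

lemma dp_extend_range:
  assumes "2 \<le> p" "c \<le> d"
  shows "dp p c = (\<Sum>j\<in>{1..d}. c div p ^ j)"
  unfolding dp_def
proof (rule sum.mono_neutral_left)
  show "\<forall>j\<in>{1..d} - {1..c}. c div p ^ j = 0"
  proof
    fix j assume j: "j \<in> {1..d} - {1..c}"
    have "c < j" using j by auto
    also have "j < 2 ^ j" by simp
    also have "2 ^ j \<le> p ^ j" using assms power_mono by blast
    finally show "c div p ^ j = 0" by simp
  qed
qed (use assms in auto)

lemma sum_dp_count:
  assumes "prime p" "0 < n"
  shows "(\<Sum>M\<in>Par d. dp p (count M n)) = (\<Sum>j\<in>{1..d}. parts_total d (n * p ^ j))"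
proof -
  have "(\<Sum>M\<in>Par d. dp p (count M n)) = (\<Sum>M\<in>Par d. \<Sum>j\<in>{1..d}. count M n div p ^ j)"
    using dp_extend_range[OF prime_ge_2_nat[OF assms(1)] Par_count_le[OF _ assms(2)]]
    by (rule sum.cong[OF refl])
  also have "\<dots> = (\<Sum>j\<in>{1..d}. \<Sum>M\<in>Par d. count M n div p ^ j)"
    by (rule sum.swap)
  also have "\<dots> = (\<Sum>j\<in>{1..d}. parts_total d (n * p ^ j))"
    using assms prime_gt_0_nat by (simp add: sum_count_div_eq_parts_total)
  finally show ?thesis .
qed

lemma sum_multiples_reindex:
  fixes C :: "nat \<Rightarrow> nat"
  assumes p: "prime p" and C0: "\<And>a. d < a \<Longrightarrow> C a = 0"
  shows "(\<Sum>n\<in>{n\<in>{1..d}. multiplicity p n < r}. C (n * p ^ j)) =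
         (\<Sum>N\<in>{N\<in>{1..d}. j \<le> multiplicity p N \<and> multiplicity p N < r + j}. C N)"
proof -
  let ?S = "{n\<in>{1..d}. multiplicity p n < r}"
  let ?B = "{N\<in>{1..d}. j \<le> multiplicity p N \<and> multiplicity p N < r + j}"
  have pj: "0 < p ^ j" using p prime_gt_0_nat by simp
  have inj: "inj_on (\<lambda>n. n * p ^ j) ?S" using pj by (auto simp: inj_on_def)
  have "(\<Sum>n\<in>?S. C (n * p ^ j)) = sum C ((\<lambda>n. n * p ^ j) ` ?S)"
    using sum.reindex[OF inj, of C] by simp
  also have "\<dots> = sum C ?B"
  proof (rule sum.mono_neutral_right)
    show "?B \<subseteq> (\<lambda>n. n * p ^ j) ` ?S"
    proof
      fix N assume N: "N \<in> ?B"
      then have "p ^ j dvd N" by (intro multiplicity_dvd') simp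
      then obtain m where m: "N = m * p ^ j" by (metis dvd_def mult.commute)
      have "0 < m" using m N by (cases m) auto
      have "m \<le> N" using m pj \<open>0 < m\<close> by (simp add: Suc_le_eq)
      moreover have "multiplicity p N = multiplicity p m + j"
        using m multiplicity_times_prime_power[OF p \<open>0 < m\<close>] by simp
      moreover have "m \<le> d" using \<open>m \<le> N\<close> N by simp
      ultimately show "N \<in> (\<lambda>n. n * p ^ j) ` ?S" using N \<open>0 < m\<close> m
        by (intro image_eqI[of _ _ m]) auto
    qed
    show "\<forall>x\<in>(\<lambda>n. n * p ^ j) ` ?S - ?B. C x = 0"
    proof
      fix x assume x: "x \<in> (\<lambda>n. n * p ^ j) ` ?S - ?B"
      then obtain n where n: "n \<in> ?S" "x = n * p ^ j" by auto
      have "multiplicity p x = multiplicity p n + j"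
        using n multiplicity_times_prime_power[OF p, of n j] by simp
      moreover have "1 \<le> x" using n pj by (simp add: Suc_le_eq)
      ultimately have "d < x" using x n by auto
      then show "C x = 0" by (rule C0)
    qed
  qed simp
  finally show ?thesis .
qed

lemma card_window:
  assumes "v \<le> d"
  shows "card {j\<in>{1..d}. j \<le> v \<and> v < r + j} = min v r"
proof -
  have "{j\<in>{1..d}. j \<le> v \<and> v < r + j} = {v - min v r<..v}" using assms by auto
  then show ?thesis by simp
qed

lemma sum_multiples_weight:
  fixes C :: "nat \<Rightarrow> nat"
  assumes p: "prime p" and C0: "\<And>a. d < a \<Longrightarrow> C a = 0"
  shows "(\<Sum>n\<in>{n\<in>{1..d}. multiplicity p n < r}. \<Sum>j\<in>{1..d}. C (n * p ^ j)) =
         (\<Sum>N\<in>{1..d}. min (multiplicity p N) r * C N)"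
proof -
  let ?W = "\<lambda>N j. j \<le> multiplicity p N \<and> multiplicity p N < r + j"
  have "(\<Sum>n\<in>{n\<in>{1..d}. multiplicity p n < r}. \<Sum>j\<in>{1..d}. C (n * p ^ j))
      = (\<Sum>j\<in>{1..d}. \<Sum>N\<in>{N\<in>{1..d}. ?W N j}. C N)"
    by (subst sum.swap) (rule sum.cong[OF refl], rule sum_multiples_reindex[OF p C0])
  also have "\<dots> = (\<Sum>N\<in>{1..d}. \<Sum>j\<in>{1..d}. if ?W N j then C N else 0)"
    by (simp only: sum.inter_filter finite_atLeastAtMost) (rule sum.swap)
  also have "\<dots> = (\<Sum>N\<in>{1..d}. card {j\<in>{1..d}. ?W N j} * C N)"
    by (simp only: sum.inter_filter[symmetric] finite_atLeastAtMost) simp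
  also have "\<dots> = (\<Sum>N\<in>{1..d}. min (multiplicity p N) r * C N)"
  proof (rule sum.cong[OF refl])
    fix N assume N: "N \<in> {1..d}"
    then have "multiplicity p N \<le> d" using multiplicity_le_self[OF p, of N] by simp
    then show "card {j\<in>{1..d}. ?W N j} * C N = min (multiplicity p N) r * C N"
      by (simp only: card_window)
  qed
  finally show ?thesis .
qed

text \<open>The exponent identity: every N in 1..d receives total weight
  (r - nu_p(N))_+ + min(nu_p(N), r) = r.\<close>

lemma exponent_identity:
  fixes C :: "nat \<Rightarrow> nat"
  assumes p: "prime p" and C0: "\<And>a. d < a \<Longrightarrow> C a = 0"
  shows "(\<Sum>n\<in>{n\<in>{1..d}. multiplicity p n < r}.
            (r - multiplicity p n) * C n + (\<Sum>j\<in>{1..d}. C (n * p ^ j)))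
         = r * (\<Sum>N\<in>{1..d}. C N)"
proof -
  have deficit: "(\<Sum>n\<in>{n\<in>{1..d}. multiplicity p n < r}. (r - multiplicity p n) * C n)
      = (\<Sum>N\<in>{1..d}. (r - multiplicity p N) * C N)"
    by (subst sum.inter_filter) (auto intro!: sum.cong)
  have multiples: "(\<Sum>n\<in>{n\<in>{1..d}. multiplicity p n < r}. \<Sum>j\<in>{1..d}. C (n * p ^ j)) =
         (\<Sum>N\<in>{1..d}. min (multiplicity p N) r * C N)"
    by (rule sum_multiples_weight[OF p C0])
  have "(\<Sum>n\<in>{n\<in>{1..d}. multiplicity p n < r}.
            (r - multiplicity p n) * C n + (\<Sum>j\<in>{1..d}. C (n * p ^ j)))
      = (\<Sum>N\<in>{1..d}. (r - multiplicity p N + min (multiplicity p N) r) * C N)"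
    by (simp only: sum.distrib deficit multiples add_mult_distrib)
  also have "\<dots> = r * (\<Sum>N\<in>{1..d}. C N)"
  proof -
    have "r - v + min v r = r" for v :: nat by linarith
    then show ?thesis by (simp add: sum_distrib_left)
  qed
  finally show ?thesis .
qed

section \<open>The product of theta over the partitions of d\<close>

text \<open>For a partition of d, theta_{p^r} is a power of p whose exponent may be summed over
  the fixed range 1..d, since parts not occurring contribute 0.\<close>

lemma theta_pp_as_power:
  assumes "M \<in> Par d"
  shows "theta_pp p r M = p ^ (\<Sum>n\<in>{n\<in>{1..d}. multiplicity p n < r}.
            (r - multiplicity p n) * count M n + dp p (count M n))"
proof -
  have dp_zero: "dp p 0 = 0" by (simp add: dp_def)
  have "(\<Sum>n\<in>{n\<in>set_mset M. 1 \<le> n \<and> multiplicity p n < r}.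
            (r - multiplicity p n) * count M n + dp p (count M n)) =
         (\<Sum>n\<in>{n\<in>{1..d}. multiplicity p n < r}.
            (r - multiplicity p n) * count M n + dp p (count M n))"
  proof (rule sum.mono_neutral_left)
    show "\<forall>n\<in>{n\<in>{1..d}. multiplicity p n < r} - {n\<in>set_mset M. 1 \<le> n \<and> multiplicity p n < r}.
      (r - multiplicity p n) * count M n + dp p (count M n) = 0"
    proof
      fix n assume "n \<in> {n\<in>{1..d}. multiplicity p n < r} - {n\<in>set_mset M. 1 \<le> n \<and> multiplicity p n < r}"
      then have "count M n = 0" by (auto simp: not_in_iff)
      then show "(r - multiplicity p n) * count M n + dp p (count M n) = 0" by (simp add: dp_zero)
    qed
  qed (use Par_parts_bounded[OF assms] in auto)
  then show ?thesis unfolding theta_pp_def power_sum[symmetric] by (rule arg_cong)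
qed

lemma prod_theta_pp:
  assumes p: "prime p"
  shows "(\<Prod>M\<in>Par d. theta_pp p r M) = p ^ (r * ltot d)"
proof -
  let ?S = "{n\<in>{1..d}. multiplicity p n < r}"
  have "(\<Prod>M\<in>Par d. theta_pp p r M) = p ^ (\<Sum>M\<in>Par d. \<Sum>n\<in>?S.
            (r - multiplicity p n) * count M n + dp p (count M n))"
    by (simp add: theta_pp_as_power power_sum)
  also have "(\<Sum>M\<in>Par d. \<Sum>n\<in>?S. (r - multiplicity p n) * count M n + dp p (count M n)) =
      (\<Sum>n\<in>?S. (r - multiplicity p n) * parts_total d n +
                 (\<Sum>j\<in>{1..d}. parts_total d (n * p ^ j)))"
    by (subst sum.swap) (simp add: sum.distrib sum_distrib_left parts_total_def sum_dp_count[OF p])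
  also have "\<dots> = r * ltot d"
    using exponent_identity[OF p parts_total_vanishes] by (simp add: ltot_eq_sum_parts_total)
  finally show ?thesis .
qed

lemma prod_theta:
  assumes "0 < l"
  shows "(\<Prod>M\<in>Par d. theta l M) = l ^ ltot d"
proof -
  have "(\<Prod>M\<in>Par d. theta l M) = (\<Prod>p\<in>prime_factors l. \<Prod>M\<in>Par d. theta_pp p (multiplicity p l) M)"
    unfolding theta_def by (rule prod.swap)
  also have "\<dots> = (\<Prod>p\<in>prime_factors l. p ^ multiplicity p l) ^ ltot d"
    by (simp add: prod_theta_pp in_prime_factors_imp_prime power_mult prod_power_distrib)
  also have "(\<Prod>p\<in>prime_factors l. p ^ multiplicity p l) = l"
    using assms by (simp add: prod_prime_factors)
  finally show ?thesis .
qed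

section \<open>Multipartitions\<close>

definition multipartitions :: "nat \<Rightarrow> nat \<Rightarrow> nat multiset list set" where
  "multipartitions m j = {xs. length xs = m \<and>
      (\<forall>M\<in>set xs. \<forall>n\<in>#M. 0 < n) \<and> sum_list (map sum_mset xs) = j}"

lemma kmp_eq_card: "kmp m j = card (multipartitions m j)"
  by (simp add: kmp_def multipartitions_def)

lemma finite_multipartitions: "finite (multipartitions m j)"
proof -
  have "multipartitions m j \<subseteq> {xs. set xs \<subseteq> (\<Union>i\<in>{..j}. Par i) \<and> length xs \<le> m}"
  proof safe
    fix xs M assume xs: "xs \<in> multipartitions m j" and M: "M \<in> set xs"
    have "sum_mset M \<le> j" using xs M unfolding multipartitions_def
      by (auto intro!: member_le_sum_list)
    then show "M \<in> (\<Union>i\<in>{..j}. Par i)" using xs M by (auto simp: multipartitions_def Par_def)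
  qed (auto simp: multipartitions_def)
  then show ?thesis by (rule finite_subset) (auto intro!: finite_lists_length_le finite_Par)
qed

lemma multipartitions_Suc:
  "multipartitions (Suc m) j = (\<lambda>(M, ys). M # ys) ` (\<Union>i\<in>{0..j}. Par i \<times> multipartitions m (j - i))"
proof safe
  fix xs assume xs: "xs \<in> multipartitions (Suc m) j"
  then obtain M ys where e: "xs = M # ys" by (cases xs) (auto simp: multipartitions_def)
  have "M \<in> Par (sum_mset M)" "ys \<in> multipartitions m (j - sum_mset M)" "sum_mset M \<in> {0..j}"
    using xs e by (auto simp: multipartitions_def Par_def)
  then show "xs \<in> (\<lambda>(M, ys). M # ys) ` (\<Union>i\<in>{0..j}. Par i \<times> multipartitions m (j - i))"
    using e by blast
qed (auto simp: multipartitions_def Par_def)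

lemma kmp_eq_coeff: "kmp m j = (Pfps ^ m) $ j"
proof (induction m arbitrary: j)
  case 0
  have "multipartitions 0 j = (if j = 0 then {[]} else {})" by (auto simp: multipartitions_def)
  then show ?case by (simp add: kmp_eq_card)
next
  case (Suc m)
  let ?U = "\<Union>i\<in>{0..j}. Par i \<times> multipartitions m (j - i)"
  have inj: "inj_on (\<lambda>(M, ys). M # ys) ?U" by (auto simp: inj_on_def)
  have disjoint: "(Par i \<times> multipartitions m (j - i)) \<inter> (Par i' \<times> multipartitions m (j - i')) = {}"
    if "i \<noteq> i'" for i i' using that by (auto simp: Par_def)
  have "kmp (Suc m) j = card ?U"
    unfolding kmp_eq_card multipartitions_Suc by (rule card_image[OF inj])
  also have "\<dots> = (\<Sum>i\<in>{0..j}. card (Par i) * kmp m (j - i))"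
    by (subst card_UN_disjoint)
       (auto simp: finite_Par finite_multipartitions disjoint card_cartesian_product kmp_eq_card)
  also have "\<dots> = (Pfps ^ Suc m) $ j"
    by (simp add: Suc.IH Pfps_def fps_mult_nth)
  finally show ?case .
qed

theorem mainTheorem6:
  fixes l w :: nat
  assumes "l \<ge> 2"
  shows "(\<forall>d. (\<Prod>M\<in>Par d. theta l M) = l ^ ltot d) \<and>
         (\<Prod>d\<in>{0..w}. \<Prod>M\<in>Par d. theta l M ^ kmp (l - 2) (w - d)) = l ^ bcoef l w"
proof
  have l_pos: "0 < l" using assms by simp
  show "\<forall>d. (\<Prod>M\<in>Par d. theta l M) = l ^ ltot d" using prod_theta[OF l_pos] by blast
  have "(\<Prod>d\<in>{0..w}. \<Prod>M\<in>Par d. theta l M ^ kmp (l - 2) (w - d))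
      = (\<Prod>d\<in>{0..w}. l ^ (ltot d * kmp (l - 2) (w - d)))"
    by (simp add: prod_power_distrib[symmetric] prod_theta[OF l_pos] power_mult)
  also have "\<dots> = l ^ (\<Sum>d\<in>{0..w}. ltot d * kmp (l - 2) (w - d))"
    by (simp add: power_sum)
  also have "(\<Sum>d\<in>{0..w}. ltot d * kmp (l - 2) (w - d)) = bcoef l w"
    unfolding bcoef_def by (subst mult.commute) (simp add: fps_mult_nth kmp_eq_coeff Lfps_def)
  finally show "(\<Prod>d\<in>{0..w}. \<Prod>M\<in>Par d. theta l M ^ kmp (l - 2) (w - d)) = l ^ bcoef l w" .
qed

end
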